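(* Let $k\geq1$, $n\geq2k$, let $\mathcal{S},\mathcal{T}$ be antichains in $\mathcal{F}_{2k}^{[1,n]}$ with $\mathcal{T}\prec_p\mathcal{S}$, let $j\geq1$, and for $i\geq1$ let $$D_i:=\Big(B\big(\mathcal{S}([i,i+1]),i+2\big)\setminus B\big(\mathcal{T}([i,i+1]),i+2\big)\Big)*\overline{[i,i+1]}.$$ If $D_{j+1}$ is not the void complex, then $$D_j\cap D_{j+1}=\Big(B\big(\mathcal{S}([j+1,j+2]),j+2\big)\setminus B\big(\mathcal{T}([j,j+1]),j+2\big)\Big)*\overline{\{j+1\}}.$$
   Context: Notation: $[m,n]=\{m,\dots,n\}$; $d$-subsets of $[n]$ are identified with increasing vectors; $G\leq_p F$ means componentwise $\leq$ and $G\prec_p F$ means $G\leq_p F-\mathbf{1}_d$ ($\mathbf{1}_d$ the all-ones vector). For $r\geq1$, $\mathcal{F}_{2r}^{[m,n]}$ is the set of sets $\{i_1,i_1+1,\dots,i_r,i_r+1\}$ with $m\leq i_1$, $i_r\leq n-1$, $i_j\leq i_{j+1}-2$, ordered by $\leq_p$; $\mathcal{F}_0^{[m,n]}=\{\emptyset\}$. For antichains, $\mathcal{T}\prec_p\mathcal{S}$ means every $G\in\mathcal{T}$ satisfies $G\prec_p F$ for some $F\in\mathcal{S}$. $\mathcal{F}_{2r}(\mathcal{S})$ is the order ideal generated by $\mathcal{S}$. For $1\leq\ell\leq k$ and $J=[j,j+2\ell-1]$, $\mathcal{S}(J)\subseteq\mathcal{F}_{2(k-\ell)}^{[1,n]}$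 is the set of maximal elements of $\{H\in\mathcal{F}_{2(k-\ell)}^{[1,n]}: H\subseteq[j+2\ell,n],\ J\cup H\in\mathcal{F}(\mathcal{S})\}$. $B(\mathcal{S}(J),m)$ is the pure simplicial complex whose facets are the sets of $\mathcal{F}_{2(k-\ell)}(\mathcal{S}(J))\cap\mathcal{F}_{2(k-\ell)}^{[m,n]}$. For pure complexes $X,Y$, $X\setminus Y$ is the complex generated by the facets of $X$ that are not facets of $Y$. $\overline{V}$ is the full simplex on $V$, $*$ is the join (join with the void complex is void). *)

theory Defs
  imports Main
begin

text \<open>d-subsets of [n] are finite sets of naturals; their increasing vector is
  sorted_list_of_set. Simplicial complexes are sets of faces (nat set set);
  the void complex is the empty set of faces.\<close>

definition le_p :: "nat set \<Rightarrow> nat set \<Rightarrow> bool" where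
  "le_p G F \<longleftrightarrow> card G = card F \<and>
     (\<forall>i<card G. sorted_list_of_set G ! i \<le> sorted_list_of_set F ! i)"

text \<open>G \<prec>_p F iff G \<le> F - 1 componentwise (integer arithmetic).\<close>
definition prec_p :: "nat set \<Rightarrow> nat set \<Rightarrow> bool" where
  "prec_p G F \<longleftrightarrow> card G = card F \<and>
     (\<forall>i<card G. sorted_list_of_set G ! i + 1 \<le> sorted_list_of_set F ! i)"

text \<open>pairfam r m n = F_{2r}^{[m,n]}\<close>
definition pairfam :: "nat \<Rightarrow> nat \<Rightarrow> nat \<Rightarrow> nat set set" where
  "pairfam r m n = {(\<Union>j<r. {f j, Suc (f j)}) | f.
      (0 < r \<longrightarrow> m \<le> f 0 \<and> f (r - 1) + 1 \<le> n) \<and>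
      (\<forall>j. j + 1 < r \<longrightarrow> f j + 2 \<le> f (j + 1))}"

definition antichain_in :: "nat set set \<Rightarrow> nat set set \<Rightarrow> bool" where
  "antichain_in A Fam \<longleftrightarrow> A \<subseteq> Fam \<and> (\<forall>G\<in>A. \<forall>F\<in>A. le_p G F \<longrightarrow> G = F)"

definition prec_fam :: "nat set set \<Rightarrow> nat set set \<Rightarrow> bool" where
  "prec_fam T S \<longleftrightarrow> (\<forall>G\<in>T. \<exists>F\<in>S. prec_p G F)"

definition ideal_p :: "nat \<Rightarrow> nat \<Rightarrow> nat set set \<Rightarrow> nat set set" where
  "ideal_p r n S = {G \<in> pairfam r 1 n. \<exists>F\<in>S. le_p G F}"

definition maximals_p :: "nat set set \<Rightarrow> nat set set" where
  "maximals_p X = {H \<in> X. \<forall>H'\<in>X. le_p H H' \<longrightarrow> H' = H}"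

text \<open>S(J) for J = [j, j+2l-1], S an antichain in F_{2k}^{[1,n]}\<close>
definition SJ :: "nat \<Rightarrow> nat \<Rightarrow> nat set set \<Rightarrow> nat \<Rightarrow> nat \<Rightarrow> nat set set" where
  "SJ k n S l j = maximals_p {H \<in> pairfam (k - l) 1 n.
      H \<subseteq> {j + 2*l..n} \<and> {j..j + 2*l - 1} \<union> H \<in> ideal_p k n S}"

definition gen_cx :: "nat set set \<Rightarrow> nat set set" where
  "gen_cx Fs = {\<sigma>. \<exists>F\<in>Fs. \<sigma> \<subseteq> F}"

definition facets :: "nat set set \<Rightarrow> nat set set" where
  "facets X = {F \<in> X. \<forall>G\<in>X. F \<subseteq> G \<longrightarrow> G = F}"

definition cdiff :: "nat set set \<Rightarrow> nat set set \<Rightarrow> nat set set" where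
  "cdiff X Y = gen_cx (facets X - facets Y)"

definition cjoin :: "nat set set \<Rightarrow> nat set set \<Rightarrow> nat set set" where
  "cjoin X Y = {\<sigma> \<union> \<tau> | \<sigma> \<tau>. \<sigma> \<in> X \<and> \<tau> \<in> Y}"

definition simplex :: "nat set \<Rightarrow> nat set set" where
  "simplex V = Pow V"

definition Bcx :: "nat \<Rightarrow> nat \<Rightarrow> nat set set \<Rightarrow> nat \<Rightarrow> nat set set" where
  "Bcx r n S' m = gen_cx (ideal_p r n S' \<inter> pairfam r m n)"

definition Dcx :: "nat \<Rightarrow> nat \<Rightarrow> nat set set \<Rightarrow> nat set set \<Rightarrow> nat \<Rightarrow> nat set set" where
  "Dcx k n S T i = cjoin (cdiff (Bcx (k - 1) n (SJ k n S 1 i) (i + 2))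
                               (Bcx (k - 1) n (SJ k n T 1 i) (i + 2)))
                         (simplex {i..i+1})"

end

theory Submission
  imports Defs
begin

(*
  Encode a facet [i, i+1] \<union> H of D(i) by H, an element of the link L(U, i), the set of
  facets of B(U([i, i+1]), i+2). Then D(i) is generated by the joins of L(S, i) - L(T, i)
  with [i, i+1], and the right-hand side by the sets H \<union> {j+1} with H below L(S, j+1) but
  not in L(T, j). Such an H lies in L(S, j), and lifting its pairs to the staircase
  max(h l, j+3+2l) puts H \<union> {j+1} under a facet of D(j+1).

  Conversely, a common face \<sigma> leaves \<tau> = \<sigma> - {j+1} inside some H in L(S, j) - L(T, j)
  and inside {j+2} \<union> H' with H' in L(S, j+1). The pointwise minimum of H and H' contains
  \<tau>, so there is a le_p-maximal set H0 containing \<tau> below L(S, j+1). If H0 were in L(T, j),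
  then T \<prec>p S would put its shift by one in L(S, j+1); either \<tau> contains every left
  endpoint of H0, which forces H \<le>p H0 and hence H in L(T, j), or raising the block of
  abutting pairs at a missing left endpoint gives a larger such set.
*)

definition spaced :: "nat \<Rightarrow> (nat \<Rightarrow> nat) \<Rightarrow> bool" where
  "spaced r f \<longleftrightarrow> (\<forall>l. l + 1 < r \<longrightarrow> f l + 2 \<le> f (l + 1))"

definition pair_seq :: "nat \<Rightarrow> nat \<Rightarrow> nat \<Rightarrow> (nat \<Rightarrow> nat) \<Rightarrow> bool" where
  "pair_seq r m n f \<longleftrightarrow> (0 < r \<longrightarrow> m \<le> f 0 \<and> f (r - 1) + 1 \<le> n) \<and> spaced r f"

definition pairs :: "(nat \<Rightarrow> nat) \<Rightarrow> nat \<Rightarrow> nat set" where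
  "pairs f r = (\<Union>l<r. {f l, Suc (f l)})"

lemma pairfam_eq: "pairfam r m n = {pairs f r | f. pair_seq r m n f}"
  unfolding pairfam_def pairs_def pair_seq_def spaced_def by auto

lemma mem_pairs: "x \<in> pairs f r \<longleftrightarrow> (\<exists>l<r. x = f l \<or> x = Suc (f l))"
  by (auto simp: pairs_def)

lemma pairs_memI: "l < r \<Longrightarrow> f l \<in> pairs f r" "l < r \<Longrightarrow> Suc (f l) \<in> pairs f r"
  by (auto simp: pairs_def)

lemma finite_pairs: "finite (pairs f r)"
  by (simp add: pairs_def)

lemma pair_seq_spaced: "pair_seq r m n f \<Longrightarrow> spaced r f"
  by (simp add: pair_seq_def)

lemma spaced_less:
  assumes "spaced r f" "i < l" "l < r" shows "f i + 2 \<le> f l"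
  using assms(2,3)
proof (induction l)
  case (Suc l)
  have "f l + 2 \<le> f (Suc l)" using assms(1) Suc.prems by (simp add: spaced_def)
  with Suc show ?case by (cases "i = l") auto
qed simp

lemma spaced_mono: "spaced r f \<Longrightarrow> i \<le> l \<Longrightarrow> l < r \<Longrightarrow> f i \<le> f l"
  using spaced_less[of r f i l] by (cases "i = l") auto

lemma spaced_lower_bound: "spaced r f \<Longrightarrow> l < r \<Longrightarrow> f 0 + 2 * l \<le> f l"
  by (induction l) (auto simp: spaced_def)

lemma pair_seq_lower: "pair_seq r m n f \<Longrightarrow> l < r \<Longrightarrow> m + 2 * l \<le> f l"
  using spaced_lower_bound[of r f l] by (auto simp: pair_seq_def)

lemma pair_seq_upper:
  assumes "pair_seq r m n f" "l < r" shows "f l + 1 \<le> n"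
proof -
  have "f l \<le> f (r - 1)" using assms by (auto simp: pair_seq_def intro!: spaced_mono[of r f])
  then show ?thesis using assms by (simp add: pair_seq_def)
qed

lemma pair_seq_iff_bounds:
  "pair_seq r m n f \<longleftrightarrow> spaced r f \<and> (\<forall>l<r. m \<le> f l \<and> f l + 1 \<le> n)"
proof
  assume f: "pair_seq r m n f"
  have "m \<le> f l \<and> f l + 1 \<le> n" if "l < r" for l
    using pair_seq_lower[OF f that] pair_seq_upper[OF f that] by linarith
  then show "spaced r f \<and> (\<forall>l<r. m \<le> f l \<and> f l + 1 \<le> n)"
    using f by (simp add: pair_seq_def)
next
  assume "spaced r f \<and> (\<forall>l<r. m \<le> f l \<and> f l + 1 \<le> n)"
  then show "pair_seq r m n f" unfolding pair_seq_def by (metis diff_less zero_less_one)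
qed

lemma pairs_subset: "pair_seq r m n f \<Longrightarrow> pairs f r \<subseteq> {m..n}"
  unfolding pair_seq_iff_bounds by (fastforce simp: mem_pairs)

definition pair_list :: "(nat \<Rightarrow> nat) \<Rightarrow> nat \<Rightarrow> nat list" where
  "pair_list f r = map (\<lambda>x. f (x div 2) + x mod 2) [0..<2 * r]"

lemma pair_list_nth: "x < 2 * r \<Longrightarrow> pair_list f r ! x = f (x div 2) + x mod 2"
  by (simp add: pair_list_def)

lemma length_pair_list: "length (pair_list f r) = 2 * r"
  by (simp add: pair_list_def)

lemma set_pair_list: "set (pair_list f r) = pairs f r"
proof (intro set_eqI iffI)
  fix x assume "x \<in> set (pair_list f r)"
  then obtain y where y: "y < 2 * r" "x = f (y div 2) + y mod 2" by (auto simp: pair_list_def)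
  then have "y div 2 < r" by linarith
  moreover have "y mod 2 = 0 \<or> y mod 2 = 1" by linarith
  ultimately show "x \<in> pairs f r" using y(2) by (auto simp: mem_pairs)
next
  fix x assume "x \<in> pairs f r"
  then obtain l where l: "l < r" "x = f l \<or> x = Suc (f l)" by (auto simp: mem_pairs)
  have "pair_list f r ! (2 * l) = f l" "pair_list f r ! (2 * l + 1) = Suc (f l)"
    using l(1) by (simp_all add: pair_list_nth)
  moreover have "2 * l < length (pair_list f r)" "2 * l + 1 < length (pair_list f r)"
    using l(1) by (simp_all add: length_pair_list)
  ultimately show "x \<in> set (pair_list f r)" using l(2) by (metis nth_mem)
qed

lemma sorted_pair_list: "spaced r f \<Longrightarrow> sorted_wrt (<) (pair_list f r)"
  unfolding pair_list_def sorted_wrt_map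
proof (rule sorted_wrt_mono_rel[OF _ sorted_wrt_upt])
  fix x y assume sp: "spaced r f" and "x \<in> set [0..<2*r]" "y \<in> set [0..<2*r]" "x < y"
  then have xy: "x div 2 \<le> y div 2" "y div 2 < r" "x < y" by (auto intro: div_le_mono)
  show "f (x div 2) + x mod 2 < f (y div 2) + y mod 2"
  proof (cases "x div 2 = y div 2")
    case True
    have "x = 2 * (x div 2) + x mod 2" "y = 2 * (y div 2) + y mod 2" by simp_all
    then have "x mod 2 < y mod 2" using xy(3) True by linarith
    then show ?thesis using True by simp
  next
    case False
    then have "f (x div 2) + 2 \<le> f (y div 2)" using spaced_less[OF sp] xy by simp
    then show ?thesis by linarith
  qed
qed

lemma sorted_list_of_pairs:
  assumes "spaced r f" shows "sorted_list_of_set (pairs f r) = pair_list f r"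
proof -
  have "sorted (pair_list f r)" "distinct (pair_list f r)"
    using sorted_pair_list[OF assms] by (simp_all add: strict_sorted_iff)
  then show ?thesis
    by (simp flip: set_pair_list add: sorted_list_of_set_sort_remdups distinct_remdups_id sorted_sort_id)
qed

lemma pair_list_le_shift_iff:
  "(\<forall>x<2 * r. pair_list f r ! x + d \<le> pair_list g r ! x) \<longleftrightarrow> (\<forall>l<r. f l + d \<le> g l)"
proof
  assume H: "\<forall>x<2 * r. pair_list f r ! x + d \<le> pair_list g r ! x"
  show "\<forall>l<r. f l + d \<le> g l"
  proof (intro allI impI)
    fix l assume "l < r"
    then show "f l + d \<le> g l" using H[rule_format, of "2 * l"] by (simp add: pair_list_nth)
  qed
next
  assume H: "\<forall>l<r. f l + d \<le> g l"
  show "\<forall>x<2 * r. pair_list f r ! x + d \<le> pair_list g r ! x"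
  proof (intro allI impI)
    fix x assume "x < 2 * r"
    then have "x div 2 < r" by linarith
    then have "f (x div 2) + d \<le> g (x div 2)" using H by blast
    then show "pair_list f r ! x + d \<le> pair_list g r ! x"
      using \<open>x < 2 * r\<close> by (simp add: pair_list_nth)
  qed
qed

lemma card_pairs: "spaced r f \<Longrightarrow> card (pairs f r) = 2 * r"
  by (metis sorted_list_of_pairs length_pair_list length_sorted_list_of_set)

lemma le_p_pairs_iff:
  "spaced r f \<Longrightarrow> spaced r g \<Longrightarrow> le_p (pairs f r) (pairs g r) \<longleftrightarrow> (\<forall>l<r. f l \<le> g l)"
  using pair_list_le_shift_iff[of r f 0 g]
  by (simp add: le_p_def card_pairs sorted_list_of_pairs)

lemma prec_p_pairs_iff:
  "spaced r f \<Longrightarrow> spaced r g \<Longrightarrow> prec_p (pairs f r) (pairs g r) \<longleftrightarrow> (\<forall>l<r. f l + 1 \<le> g l)"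
  using pair_list_le_shift_iff[of r f 1 g]
  by (simp add: prec_p_def card_pairs sorted_list_of_pairs)

lemma pairs_inj:
  assumes "spaced r f" "spaced r g" "pairs f r = pairs g r" "l < r" shows "f l = g l"
proof -
  have "pair_list f r ! (2 * l) = pair_list g r ! (2 * l)"
    using assms(1-3) by (metis sorted_list_of_pairs)
  then show ?thesis using assms(4) by (simp add: pair_list_nth)
qed

lemma le_p_refl: "le_p A A"
  by (simp add: le_p_def)

lemma le_p_trans: "le_p A B \<Longrightarrow> le_p B C \<Longrightarrow> le_p A C"
  unfolding le_p_def by (metis order_trans)

lemma le_p_Sum:
  assumes "finite A" "finite B" "le_p A B"
  shows "\<Sum>A \<le> \<Sum>B" and "\<Sum>A = \<Sum>B \<Longrightarrow> A = B"
proof -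
  let ?xs = "sorted_list_of_set A" and ?ys = "sorted_list_of_set B"
  have len: "length ?xs = length ?ys" and le: "\<forall>i<length ?xs. ?xs ! i \<le> ?ys ! i"
    using assms(3) by (simp_all add: le_p_def)
  have sums: "\<Sum>A = (\<Sum>i<length ?xs. ?xs ! i)" "\<Sum>B = (\<Sum>i<length ?xs. ?ys ! i)"
    using sum_list_distinct_conv_sum_set[of ?xs "\<lambda>x. x"] assms(1)
      sum_list_distinct_conv_sum_set[of ?ys "\<lambda>x. x"] assms(2) len
    by (simp_all add: sum_list_sum_nth atLeast0LessThan)
  show "\<Sum>A \<le> \<Sum>B" unfolding sums by (rule sum_mono) (use le in auto)
  assume eq: "\<Sum>A = \<Sum>B"
  have "\<forall>i<length ?xs. ?xs ! i = ?ys ! i"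
  proof (rule ccontr)
    assume "\<not> ?thesis"
    then obtain i where "i < length ?xs" "?xs ! i < ?ys ! i" using le by (meson le_neq_implies_less)
    then have "(\<Sum>i<length ?xs. ?xs ! i) < (\<Sum>i<length ?xs. ?ys ! i)"
      by (intro sum_strict_mono_ex1) (use le in auto)
    with eq sums show False by simp
  qed
  then have "?xs = ?ys" using len by (intro nth_equalityI) auto
  then show "A = B" using assms(1,2) by (metis set_sorted_list_of_set)
qed

text \<open>The sum of the elements strictly increases along le_p, so a maximiser of it among the
  elements above H is maximal.\<close>
lemma ex_maximals_p_above:
  assumes "finite X" "\<forall>G\<in>X. finite G" "H \<in> X"
  shows "\<exists>M\<in>maximals_p X. le_p H M"
proof -
  let ?Y = "{M\<in>X. le_p H M}"
  have fin: "finite ?Y" and "?Y \<noteq> {}" using assms(1,3) le_p_refl by auto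
  then have "Max (Sum ` ?Y) \<in> Sum ` ?Y" by (intro Max_in) auto
  then obtain M where M: "M \<in> ?Y" "\<Sum>M = Max (Sum ` ?Y)" by auto
  then have M_max: "\<forall>M'\<in>?Y. \<Sum>M' \<le> \<Sum>M" using fin by simp
  have "H' = M" if "H' \<in> X" "le_p M H'" for H'
  proof -
    have "\<Sum>H' \<le> \<Sum>M" using M M_max that le_p_trans by blast
    then show ?thesis using le_p_Sum[of M H'] that M assms(2) by (simp add: le_antisym)
  qed
  then show ?thesis using M by (auto simp: maximals_p_def)
qed

lemma pairfamE:
  assumes "G \<in> pairfam r m n"
  obtains f where "G = pairs f r" "pair_seq r m n f"
  using assms by (auto simp: pairfam_eq)

lemma pairs_in_pairfam: "pair_seq r m n f \<Longrightarrow> pairs f r \<in> pairfam r m n"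
  by (auto simp: pairfam_eq)

lemma pairfam_subset: "G \<in> pairfam r m n \<Longrightarrow> G \<subseteq> {m..n}"
  by (erule pairfamE) (simp add: pairs_subset)

lemma pairfam_mono: "m \<le> m' \<Longrightarrow> pairfam r m' n \<subseteq> pairfam r m n"
  unfolding pairfam_eq pair_seq_def by auto

lemma pairfam_restrict:
  assumes "G \<in> pairfam r m' n" "G \<subseteq> {m..n}" shows "G \<in> pairfam r m n"
proof -
  obtain f where f: "G = pairs f r" "pair_seq r m' n f" using assms(1) by (rule pairfamE)
  have "0 < r \<Longrightarrow> f 0 \<in> G" using f by (auto simp: mem_pairs)
  then have "pair_seq r m n f" using f(2) assms(2) by (auto simp: pair_seq_def)
  then show ?thesis using f pairs_in_pairfam by simp
qed

lemma pairfam_card: "G \<in> pairfam r m n \<Longrightarrow> finite G \<and> card G = 2 * r"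
  by (erule pairfamE) (simp add: card_pairs pair_seq_spaced finite_pairs)

lemma finite_pairfam: "finite (pairfam r m n)"
  using finite_subset[of "pairfam r m n" "Pow {m..n}"] pairfam_subset by blast

lemma pairs_in_pairfam_below:
  assumes "spaced r g" "0 < r \<longrightarrow> m' \<le> g 0" "B \<in> pairfam r m n" "le_p (pairs g r) B"
  shows "pairs g r \<in> pairfam r m' n"
proof -
  obtain b where b: "B = pairs b r" "pair_seq r m n b" using assms(3) by (rule pairfamE)
  have "g l + 1 \<le> n" if "l < r" for l
    using assms(1,4) b that pair_seq_upper[OF b(2) that]
    by (auto simp: le_p_pairs_iff pair_seq_spaced)
  then have "pair_seq r m' n g" using assms(1,2) by (simp add: pair_seq_def)
  then show ?thesis by (rule pairs_in_pairfam)
qed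

lemma pairs_in_pairfam_iff:
  assumes "spaced r f" shows "pairs f r \<in> pairfam r m n \<longleftrightarrow> pair_seq r m n f"
proof
  assume "pairs f r \<in> pairfam r m n"
  then obtain g where g: "pairs f r = pairs g r" "pair_seq r m n g" by (auto elim: pairfamE)
  then have "\<forall>l<r. f l = g l" using pairs_inj[OF assms pair_seq_spaced] by blast
  then show "pair_seq r m n f" using g(2) assms by (simp add: pair_seq_iff_bounds)
qed (rule pairs_in_pairfam)

lemma mem_ideal_p_below:
  assumes "U \<subseteq> pairfam r 1 n" "spaced r g" "0 < r \<longrightarrow> 1 \<le> g 0" "F \<in> U"
    "le_p (pairs g r) F"
  shows "pairs g r \<in> ideal_p r n U"
  using pairs_in_pairfam_below[OF assms(2,3) _ assms(5)] assms(1,4,5)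
  by (auto simp: ideal_p_def)

lemma pairs_case_nat: "pairs (case_nat i f) (Suc r) = {i..i+1} \<union> pairs f r"
  unfolding pairs_def lessThan_Suc_eq_insert_0 by auto

lemma spaced_case_nat_iff:
  "spaced (Suc r) (case_nat i f) \<longleftrightarrow> (0 < r \<longrightarrow> i + 2 \<le> f 0) \<and> spaced r f"
  unfolding spaced_def by (auto simp: less_Suc_eq_0_disj split: nat.split)

lemma pair_seq_case_nat: "pair_seq r (i + 2) n f \<Longrightarrow> spaced (Suc r) (case_nat i f)"
  by (simp add: spaced_case_nat_iff pair_seq_def)

lemma facets_gen_cx:
  assumes "\<forall>G\<in>X. finite G \<and> card G = c" shows "facets (gen_cx X) = X"
proof (intro set_eqI iffI)
  fix F assume F: "F \<in> facets (gen_cx X)"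
  then obtain G where G: "G \<in> X" "F \<subseteq> G" by (auto simp: facets_def gen_cx_def)
  then have "G \<in> gen_cx X" by (auto simp: gen_cx_def)
  then have "G = F" using F G(2) by (simp add: facets_def)
  then show "F \<in> X" using G(1) by simp
next
  fix F assume F: "F \<in> X"
  have "G = F" if G: "G \<in> gen_cx X" "F \<subseteq> G" for G
  proof -
    obtain G' where G': "G' \<in> X" "G \<subseteq> G'" using G(1) by (auto simp: gen_cx_def)
    then have "F = G'" using card_subset_eq[of G' F] assms F G(2) by auto
    then show "G = F" using G' G(2) by blast
  qed
  moreover have "F \<in> gen_cx X" using F by (auto simp: gen_cx_def)
  ultimately show "F \<in> facets (gen_cx X)" by (simp add: facets_def)
qed

lemma cdiff_gen_cx:
  assumes "\<forall>G\<in>X. finite G \<and> card G = c" "\<forall>G\<in>Y. finite G \<and> card G = c"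
  shows "cdiff (gen_cx X) (gen_cx Y) = gen_cx (X - Y)"
  by (simp add: cdiff_def facets_gen_cx[OF assms(1)] facets_gen_cx[OF assms(2)])

lemma cjoin_gen_cx_simplex: "cjoin (gen_cx X) (simplex V) = gen_cx ((\<lambda>H. H \<union> V) ` X)"
proof (intro set_eqI iffI)
  fix \<rho> assume "\<rho> \<in> cjoin (gen_cx X) (simplex V)"
  then obtain \<sigma> \<tau> H where "\<rho> = \<sigma> \<union> \<tau>" "\<tau> \<subseteq> V" "H \<in> X" "\<sigma> \<subseteq> H"
    by (auto simp: cjoin_def simplex_def gen_cx_def)
  then show "\<rho> \<in> gen_cx ((\<lambda>H. H \<union> V) ` X)" by (auto simp: gen_cx_def)
next
  fix \<rho> assume "\<rho> \<in> gen_cx ((\<lambda>H. H \<union> V) ` X)"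
  then obtain H where "H \<in> X" "\<rho> \<subseteq> H \<union> V" by (auto simp: gen_cx_def)
  then have "\<rho> - V \<in> gen_cx X" "\<rho> \<inter> V \<in> simplex V" "\<rho> = (\<rho> - V) \<union> (\<rho> \<inter> V)"
    by (auto simp: gen_cx_def simplex_def)
  then show "\<rho> \<in> cjoin (gen_cx X) (simplex V)" unfolding cjoin_def by blast
qed

definition down_set :: "nat \<Rightarrow> nat \<Rightarrow> nat \<Rightarrow> nat set set \<Rightarrow> nat set set" where
  "down_set r m n X = {G \<in> pairfam r m n. \<exists>M\<in>X. le_p G M}"

lemma down_set_subset_pairfam: "down_set r m n X \<subseteq> pairfam r m n"
  by (auto simp: down_set_def)

lemma down_set_card: "\<forall>G\<in>down_set r m n X. finite G \<and> card G = 2 * r"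
  using down_set_subset_pairfam pairfam_card by blast

lemma Bcx_eq_gen_cx_down_set: "1 \<le> m \<Longrightarrow> Bcx r n X m = gen_cx (down_set r m n X)"
proof -
  assume "1 \<le> m"
  then have "ideal_p r n X \<inter> pairfam r m n = down_set r m n X"
    using pairfam_mono[of 1 m r n] by (auto simp: ideal_p_def down_set_def)
  then show ?thesis by (simp add: Bcx_def)
qed

lemma down_set_maximals_p:
  assumes "finite X" "\<forall>G\<in>X. finite G"
  shows "down_set r m n (maximals_p X) = down_set r m n X"
  using ex_maximals_p_above[OF assms] le_p_trans
  unfolding down_set_def maximals_p_def by blast

text \<open>For U = S, T this is the set of facets of B(U([i, i+1]), i+2).\<close>
definition link :: "nat \<Rightarrow> nat \<Rightarrow> nat set set \<Rightarrow> nat \<Rightarrow> nat set set" where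
  "link r n U i = {H \<in> pairfam r (i + 2) n. {i..i+1} \<union> H \<in> ideal_p (Suc r) n U}"

lemma link_subset_pairfam: "link r n U i \<subseteq> pairfam r (i + 2) n"
  by (auto simp: link_def)

lemma finite_link: "finite (link r n U i)"
  using finite_subset[OF link_subset_pairfam finite_pairfam] .

lemma link_card: "\<forall>G\<in>link r n U i. finite G \<and> card G = 2 * r"
  using link_subset_pairfam pairfam_card by blast

lemma SJ_eq_maximals_p_link: "SJ (Suc r) n U 1 i = maximals_p (link r n U i)"
proof -
  have "{H \<in> pairfam r 1 n. H \<subseteq> {i+2..n} \<and> {i..i+1} \<union> H \<in> ideal_p (Suc r) n U}
      = link r n U i"
    using pairfam_restrict[of _ r 1 n "i + 2"] pairfam_mono[of 1 "i + 2" r n]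
      pairfam_subset[of _ r "i + 2" n]
    by (auto simp: link_def)
  then show ?thesis by (simp add: SJ_def)
qed

lemma link_antimono:
  assumes U: "U \<subseteq> pairfam (Suc r) 1 n" and "1 \<le> i'" "i' \<le> i"
    and G: "G \<in> pairfam r (i' + 2) n" and M: "M \<in> link r n U i" and "le_p G M"
  shows "G \<in> link r n U i'"
proof -
  obtain g where g: "G = pairs g r" "pair_seq r (i' + 2) n g" using G by (rule pairfamE)
  have M': "M \<in> pairfam r (i + 2) n" "{i..i+1} \<union> M \<in> ideal_p (Suc r) n U"
    using M by (auto simp: link_def)
  obtain f where f: "M = pairs f r" "pair_seq r (i + 2) n f" using M'(1) by (rule pairfamE)
  obtain F where F: "F \<in> U" "le_p ({i..i+1} \<union> M) F" using M'(2) by (auto simp: ideal_p_def)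
  have sg: "spaced (Suc r) (case_nat i' g)" and sf: "spaced (Suc r) (case_nat i f)"
    using g(2) f(2) by (simp_all add: pair_seq_case_nat)
  have "\<forall>l<r. g l \<le> f l"
    using \<open>le_p G M\<close> g f by (simp add: le_p_pairs_iff pair_seq_spaced)
  then have "\<forall>l<Suc r. case_nat i' g l \<le> case_nat i f l"
    using \<open>i' \<le> i\<close> by (auto split: nat.split)
  then have "le_p (pairs (case_nat i' g) (Suc r)) (pairs (case_nat i f) (Suc r))"
    by (simp add: le_p_pairs_iff[OF sg sf])
  then have "le_p (pairs (case_nat i' g) (Suc r)) F"
    using F(2) f(1) le_p_trans by (simp add: pairs_case_nat)
  then have "pairs (case_nat i' g) (Suc r) \<in> ideal_p (Suc r) n U"
    using mem_ideal_p_below[OF U sg _ F(1)] \<open>1 \<le> i'\<close> by simp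
  then show ?thesis using G g by (simp add: link_def pairs_case_nat)
qed

lemma down_set_link:
  "U \<subseteq> pairfam (Suc r) 1 n \<Longrightarrow> 1 \<le> i \<Longrightarrow> down_set r (i + 2) n (link r n U i) = link r n U i"
  using link_antimono[of U r n i i] link_subset_pairfam le_p_refl
  unfolding down_set_def by blast

lemma down_set_link_Suc_subset:
  "U \<subseteq> pairfam (Suc r) 1 n \<Longrightarrow> 1 \<le> j \<Longrightarrow> down_set r (j + 2) n (link r n U (Suc j)) \<subseteq> link r n U j"
  using link_antimono[of U r n j "Suc j"] by (auto simp: down_set_def)

lemma Bcx_SJ_eq_gen_cx:
  assumes "1 \<le> m"
  shows "Bcx r n (SJ (Suc r) n U 1 i) m = gen_cx (down_set r m n (link r n U i))"
proof -
  have "\<forall>G\<in>link r n U i. finite G" using link_card by blast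
  then show ?thesis
    unfolding Bcx_eq_gen_cx_down_set[OF assms] SJ_eq_maximals_p_link
    by (simp add: down_set_maximals_p[OF finite_link])
qed

lemma Dcx_eq_gen_cx:
  assumes "S \<subseteq> pairfam (Suc r) 1 n" "T \<subseteq> pairfam (Suc r) 1 n" "1 \<le> i"
  shows "Dcx (Suc r) n S T i
    = gen_cx ((\<lambda>H. H \<union> {i..i+1}) ` (link r n S i - link r n T i))"
proof -
  have "1 \<le> i + 2" by simp
  show ?thesis
    unfolding Dcx_def diff_Suc_1 Bcx_SJ_eq_gen_cx[OF \<open>1 \<le> i + 2\<close>]
      down_set_link[OF assms(1,3)] down_set_link[OF assms(2,3)]
      cdiff_gen_cx[OF link_card link_card] cjoin_gen_cx_simplex ..
qed

lemma rhs_eq_gen_cx: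
  assumes "T \<subseteq> pairfam (Suc r) 1 n" "1 \<le> j"
  shows "cjoin (cdiff (Bcx r n (SJ (Suc r) n S 1 (Suc j)) (j + 2))
                      (Bcx r n (SJ (Suc r) n T 1 j) (j + 2))) (simplex {Suc j})
    = gen_cx ((\<lambda>H. H \<union> {Suc j}) ` (down_set r (j + 2) n (link r n S (Suc j)) - link r n T j))"
proof -
  have "1 \<le> j + 2" by simp
  show ?thesis
    unfolding Bcx_SJ_eq_gen_cx[OF \<open>1 \<le> j + 2\<close>] down_set_link[OF assms]
      cdiff_gen_cx[OF down_set_card link_card] cjoin_gen_cx_simplex ..
qed

lemma shift_link:
  assumes S: "S \<subseteq> pairfam (Suc r) 1 n" and T: "T \<subseteq> pairfam (Suc r) 1 n"
    and "prec_fam T S" "1 \<le> j" and c: "pair_seq r (j + 2) n c" "pairs c r \<in> link r n T j"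
  shows "pairs (\<lambda>l. Suc (c l)) r \<in> link r n S (Suc j)"
proof -
  let ?c = "case_nat j c" and ?d = "case_nat (Suc j) (\<lambda>l. Suc (c l))"
  have sc: "spaced (Suc r) ?c" using c(1) by (rule pair_seq_case_nat)
  have sd: "spaced (Suc r) ?d"
    unfolding spaced_case_nat_iff using c(1) by (auto simp: pair_seq_def spaced_def)
  have shift: "?d l = Suc (?c l)" for l by (cases l) simp_all
  obtain G where G: "G \<in> T" "le_p (pairs ?c (Suc r)) G"
    using c(2) by (auto simp: link_def ideal_p_def pairs_case_nat)
  obtain g where g: "G = pairs g (Suc r)" "pair_seq (Suc r) 1 n g" using G(1) T by (auto elim: pairfamE)
  obtain F where F: "F \<in> S" "prec_p G F" using assms(3) G(1) by (auto simp: prec_fam_def)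
  obtain f where f: "F = pairs f (Suc r)" "pair_seq (Suc r) 1 n f" using F(1) S by (auto elim: pairfamE)
  have cg: "\<forall>l<Suc r. ?c l \<le> g l" and gf: "\<forall>l<Suc r. g l + 1 \<le> f l"
    using G(2) F(2) g f sc by (simp_all add: le_p_pairs_iff prec_p_pairs_iff pair_seq_spaced)
  have "?d l \<le> f l" if "l < Suc r" for l
    using cg[rule_format, OF that] gf[rule_format, OF that] shift[of l] by linarith
  then have "\<forall>l<Suc r. ?d l \<le> f l" by blast
  then have "le_p (pairs ?d (Suc r)) F"
    using f sd by (simp add: le_p_pairs_iff pair_seq_spaced)
  then have ideal: "pairs ?d (Suc r) \<in> ideal_p (Suc r) n S"
    and "pairs ?d (Suc r) \<in> pairfam (Suc r) 1 n"
    using mem_ideal_p_below[OF S sd _ F(1)] pairs_in_pairfam_below[OF sd _ _] F(1) S by auto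
  then have "pair_seq (Suc r) 1 n ?d" by (simp add: pairs_in_pairfam_iff[OF sd])
  then have "pair_seq r (Suc j + 2) n (\<lambda>l. Suc (c l))"
    using c(1) unfolding pair_seq_iff_bounds by (auto simp: spaced_case_nat_iff)
  then show ?thesis using ideal by (simp add: link_def pairs_in_pairfam pairs_case_nat)
qed

definition tight_run :: "(nat \<Rightarrow> nat) \<Rightarrow> nat \<Rightarrow> nat \<Rightarrow> bool" where
  "tight_run c p l \<longleftrightarrow> p \<le> l \<and> (\<forall>q. p \<le> q \<and> q < l \<longrightarrow> c (Suc q) = c q + 2)"

text \<open>Raises by one the maximal block of abutting pairs that starts with pair p.\<close>
definition bump :: "(nat \<Rightarrow> nat) \<Rightarrow> nat \<Rightarrow> nat \<Rightarrow> nat" where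
  "bump c p l = (if tight_run c p l then Suc (c l) else c l)"

lemma tight_run_SucD: "tight_run c p (Suc l) \<Longrightarrow> p \<le> l \<Longrightarrow> tight_run c p l \<and> c (Suc l) = c l + 2"
  unfolding tight_run_def by auto

lemma tight_run_SucI: "tight_run c p l \<Longrightarrow> c (Suc l) = c l + 2 \<Longrightarrow> tight_run c p (Suc l)"
  unfolding tight_run_def using less_Suc_eq by auto

lemma bump_bounds: "c l \<le> bump c p l" "bump c p l \<le> Suc (c l)"
  by (simp_all add: bump_def)

lemma bump_at: "bump c p p = Suc (c p)"
  by (simp add: bump_def tight_run_def)

lemma spaced_bump: assumes "spaced r c" shows "spaced r (bump c p)"
  unfolding spaced_def
proof (intro allI impI)
  fix l assume "l + 1 < r"
  then have step: "c l + 2 \<le> c (Suc l)" using assms by (simp add: spaced_def)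
  consider "tight_run c p (Suc l)" "tight_run c p l" | "tight_run c p (Suc l)" "\<not> tight_run c p l"
    | "\<not> tight_run c p (Suc l)" "tight_run c p l" | "\<not> tight_run c p (Suc l)" "\<not> tight_run c p l"
    by blast
  then show "bump c p l + 2 \<le> bump c p (l + 1)"
  proof cases
    case 3
    then have "c (Suc l) \<noteq> c l + 2" using tight_run_SucI by blast
    then show ?thesis using 3 step by (simp add: bump_def)
  qed (use step in \<open>auto simp: bump_def\<close>)
qed

lemma pairs_bump_cover:
  assumes "x \<in> pairs c r" "x \<noteq> c p" shows "x \<in> pairs (bump c p) r"
proof -
  obtain l where l: "l < r" "x = c l \<or> x = Suc (c l)" using assms(1) by (auto simp: mem_pairs)
  show ?thesis
  proof (cases "tight_run c p l \<and> x = c l")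
    case False
    then have "x = bump c p l \<or> x = Suc (bump c p l)" using l(2) by (auto simp: bump_def)
    then show ?thesis using l(1) by (auto simp: mem_pairs)
  next
    case True
    then have "l \<noteq> p" using assms(2) by blast
    then have "p < l" using True by (simp add: tight_run_def)
    then obtain l' where l': "l = Suc l'" "p \<le> l'" by (cases l) auto
    then have "tight_run c p l'" "c l = c l' + 2" using tight_run_SucD True by blast+
    then have "x = Suc (bump c p l')" using True by (simp add: bump_def)
    then show ?thesis using pairs_memI(2)[of l' r "bump c p"] l(1) l'(1) by simp
  qed
qed

lemma bump_in_down_set:
  assumes c: "pair_seq r m n c" and "pairs (\<lambda>l. Suc (c l)) r \<in> X" "X \<subseteq> pairfam r m' n"
  shows "pairs (bump c p) r \<in> down_set r m n X"
proof -
  have sc: "spaced r c" and sb: "spaced r (bump c p)"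
    using c spaced_bump by (simp_all add: pair_seq_spaced)
  then have "spaced r (\<lambda>l. Suc (c l))" by (simp add: spaced_def)
  then have le: "le_p (pairs (bump c p) r) (pairs (\<lambda>l. Suc (c l)) r)"
    using bump_bounds by (simp add: le_p_pairs_iff[OF sb])
  have "0 < r \<longrightarrow> m \<le> bump c p 0"
    using c bump_bounds[of c 0 p] by (auto simp: pair_seq_def)
  then have "pairs (bump c p) r \<in> pairfam r m n"
    using pairs_in_pairfam_below[OF sb _ _ le] assms(2,3) by blast
  then show ?thesis using assms(2) le by (auto simp: down_set_def)
qed

lemma le_if_starts_in_pairs:
  assumes "spaced r h" "spaced r c" "\<forall>p<r. c p \<in> pairs h r" "p < r"
  shows "h p \<le> c p"
  using assms(4)
proof (induction p)
  case 0
  obtain s where "s < r" "c 0 = h s \<or> c 0 = Suc (h s)" using assms(3) 0 by (auto simp: mem_pairs)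
  then show ?case using spaced_mono[OF assms(1), of 0 s] by auto
next
  case (Suc p)
  obtain s where s: "s < r" "c (Suc p) = h s \<or> c (Suc p) = Suc (h s)"
    using assms(3) Suc.prems by (auto simp: mem_pairs)
  show ?case
  proof (cases "Suc p \<le> s")
    case True
    then show ?thesis using spaced_mono[OF assms(1) True s(1)] s(2) by auto
  next
    case False
    have "h p \<le> c p" "c p + 2 \<le> c (Suc p)" "h s \<le> h p"
      using Suc assms(2) False spaced_mono[OF assms(1), of s p] by (auto simp: spaced_def)
    then show ?thesis using s(2) by auto
  qed
qed

lemma spaced_min:
  "spaced r h \<Longrightarrow> spaced r h' \<Longrightarrow> spaced r (\<lambda>l. min (h l) (h' l))"
  unfolding spaced_def by fastforce

lemma pairs_min_cover:
  assumes h: "spaced r h" and h': "spaced r h'"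
    and "0 < r \<longrightarrow> m \<le> h 0" "0 < r \<longrightarrow> m + 1 \<le> h' 0"
    and "\<tau> \<subseteq> pairs h r" "\<tau> \<subseteq> insert m (pairs h' r)"
  shows "\<tau> \<subseteq> pairs (\<lambda>l. min (h l) (h' l)) r"
proof
  fix x assume x: "x \<in> \<tau>"
  obtain i where i: "i < r" "x = h i \<or> x = Suc (h i)" using assms(5) x mem_pairs by blast
  have "x = m \<or> x \<in> pairs h' r" using assms(6) x by blast
  then show "x \<in> pairs (\<lambda>l. min (h l) (h' l)) r"
  proof
    assume "x = m"
    then have "i = 0" using spaced_less[OF h, of 0 i] i assms(3) by (cases "i = 0") auto
    then have "x = min (h 0) (h' 0)" using \<open>x = m\<close> i assms(3,4) by auto
    then show ?thesis using pairs_memI(1)[of 0 r "\<lambda>l. min (h l) (h' l)"] i(1) by simp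
  next
    assume "x \<in> pairs h' r"
    then obtain l where l: "l < r" "x = h' l \<or> x = Suc (h' l)" by (auto simp: mem_pairs)
    consider "i = l" | "l < i" | "i < l" by linarith
    then show ?thesis
    proof cases
      case 1
      then show ?thesis using i l by (auto simp: mem_pairs min_def)
    next
      case 2
      then have "min (h i) (h' i) = h i" using spaced_less[OF h' 2 i(1)] i l by auto
      then show ?thesis using i by (auto simp: mem_pairs)
    next
      case 3
      then have "min (h l) (h' l) = h' l" using spaced_less[OF h 3 l(1)] i l by auto
      then show ?thesis using l by (auto simp: mem_pairs)
    qed
  qed
qed

lemma spaced_max_staircase: "spaced r h \<Longrightarrow> spaced r (\<lambda>l. max (h l) (a + 2 * l))"
  unfolding spaced_def by fastforce

lemma pairs_subset_staircase:
  assumes h: "pair_seq r m n h"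
  shows "pairs h r \<subseteq> insert m (pairs (\<lambda>l. max (h l) (m + 1 + 2 * l)) r)"
proof
  let ?h = "\<lambda>l. max (h l) (m + 1 + 2 * l)"
  have tight: "?h l = Suc (h l)" if "l < r" "h l < m + 1 + 2 * l" for l
    using pair_seq_lower[OF h that(1)] that(2) by simp
  fix x assume "x \<in> pairs h r"
  then obtain l where l: "l < r" "x = h l \<or> x = Suc (h l)" by (auto simp: mem_pairs)
  show "x \<in> insert m (pairs ?h r)"
  proof (cases "h l < m + 1 + 2 * l")
    case False
    then show ?thesis using l by (auto simp: mem_pairs max_def)
  next
    case True
    then have hl: "h l = m + 2 * l" using pair_seq_lower[OF h l(1)] by simp
    show ?thesis
    proof (cases "x = h l \<and> 0 < l")
      case True
      then obtain l' where l': "l = Suc l'" by (cases l) auto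
      have "h l' + 2 \<le> h l" "m + 2 * l' \<le> h l'"
        using h l(1) l' pair_seq_lower[OF h, of l'] by (auto simp: pair_seq_def spaced_def)
      then have "x = Suc (?h l')" using tight[of l'] True hl l(1) l' by simp
      moreover have "l' < r" using l(1) l' by simp
      ultimately show ?thesis using pairs_memI(2)[of l' r ?h] by simp
    next
      case False
      then show ?thesis using l tight[OF l(1) \<open>h l < m + 1 + 2 * l\<close>] hl by (auto simp: mem_pairs)
    qed
  qed
qed

lemma down_set_link_Suc_cover:
  assumes S: "S \<subseteq> pairfam (Suc r) 1 n" and T: "T \<subseteq> pairfam (Suc r) 1 n" and "1 \<le> j"
    and H: "H \<in> down_set r (j + 2) n (link r n S (Suc j))" and HT: "H \<notin> link r n T j"
  shows "\<exists>H'\<in>link r n S (Suc j) - link r n T (Suc j). H \<union> {j + 1} \<subseteq> H' \<union> {Suc j..Suc j + 1}"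
proof -
  obtain M where HM: "H \<in> pairfam r (j + 2) n" "M \<in> link r n S (Suc j)" "le_p H M"
    using H by (auto simp: down_set_def)
  obtain h where h: "H = pairs h r" "pair_seq r (j + 2) n h" using HM(1) by (rule pairfamE)
  obtain f where f: "M = pairs f r" "pair_seq r (Suc j + 2) n f"
    using HM(2) link_subset_pairfam by (blast elim: pairfamE)
  define h' where "h' = (\<lambda>l. max (h l) (j + 2 + 1 + 2 * l))"
  have sh: "spaced r h" and sf: "spaced r f" using h(2) f(2) by (simp_all add: pair_seq_spaced)
  have sh': "spaced r h'" unfolding h'_def using sh by (rule spaced_max_staircase)
  have "h l \<le> f l" if "l < r" for l using HM(3) h f sh sf that by (simp add: le_p_pairs_iff)
  then have bounds: "h l \<le> h' l" "h' l \<le> f l" if "l < r" for l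
    using that pair_seq_lower[OF f(2) that] by (auto simp: h'_def)
  have "Suc j + 2 \<le> h' l" for l by (simp add: h'_def)
  then have "pair_seq r (Suc j + 2) n h'"
    using sh' bounds(2) pair_seq_upper[OF f(2)] by (force simp: pair_seq_iff_bounds)
  then have "pairs h' r \<in> pairfam r (Suc j + 2) n" by (rule pairs_in_pairfam)
  moreover have "le_p (pairs h' r) M" and "le_p H (pairs h' r)"
    using bounds f(1) h(1) sh sh' sf by (simp_all add: le_p_pairs_iff)
  ultimately have "pairs h' r \<in> link r n S (Suc j)" and "pairs h' r \<notin> link r n T (Suc j)"
    using link_antimono[OF S, of "Suc j" "Suc j"] link_antimono[OF T \<open>1 \<le> j\<close>, of "Suc j"]
      HM(1,2) HT by auto
  moreover have "H \<union> {j + 1} \<subseteq> pairs h' r \<union> {Suc j..Suc j + 1}"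
    using pairs_subset_staircase[OF h(2)] h(1) by (auto simp: h'_def)
  ultimately show ?thesis by blast
qed

lemma maximal_cover_notin_link:
  assumes S: "S \<subseteq> pairfam (Suc r) 1 n" and T: "T \<subseteq> pairfam (Suc r) 1 n"
    and "prec_fam T S" and "1 \<le> j"
    and H: "H \<in> pairfam r (j + 2) n" "H \<notin> link r n T j" "\<tau> \<subseteq> H"
    and H0: "H0 \<in> maximals_p {G \<in> down_set r (j + 2) n (link r n S (Suc j)). \<tau> \<subseteq> G}"
  shows "H0 \<notin> link r n T j"
proof
  assume H0T: "H0 \<in> link r n T j"
  have H0Z: "H0 \<in> down_set r (j + 2) n (link r n S (Suc j))" "\<tau> \<subseteq> H0"
    using H0 by (auto simp: maximals_p_def)
  obtain c where c: "H0 = pairs c r" "pair_seq r (j + 2) n c"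
    using H0Z(1) down_set_subset_pairfam by (blast elim: pairfamE)
  have sc: "spaced r c" using c(2) by (rule pair_seq_spaced)
  show False
  proof (cases "\<forall>p<r. c p \<in> \<tau>")
    case True
    obtain h where h: "H = pairs h r" "pair_seq r (j + 2) n h" using H(1) by (rule pairfamE)
    have sh: "spaced r h" using h(2) by (rule pair_seq_spaced)
    have "h p \<le> c p" if "p < r" for p
      using le_if_starts_in_pairs[OF sh sc _ that] True H(3) h(1) by blast
    then have "le_p H H0" using h(1) c(1) by (simp add: le_p_pairs_iff[OF sh sc])
    then show False using link_antimono[OF T \<open>1 \<le> j\<close> order_refl H(1) H0T] H(2) by blast
  next
    case False
    then obtain p where p: "p < r" "c p \<notin> \<tau>" by blast
    have sb: "spaced r (bump c p)" using sc by (rule spaced_bump)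
    have shifted: "pairs (\<lambda>l. Suc (c l)) r \<in> link r n S (Suc j)"
      using shift_link[OF S T assms(3,4) c(2)] H0T c(1) by simp
    have "pairs (bump c p) r \<in> down_set r (j + 2) n (link r n S (Suc j))"
      using bump_in_down_set[OF c(2) shifted link_subset_pairfam] .
    moreover have "\<tau> \<subseteq> pairs (bump c p) r"
    proof
      fix x assume "x \<in> \<tau>"
      then have "x \<in> pairs c r" "x \<noteq> c p" using H0Z(2) c(1) p(2) by auto
      then show "x \<in> pairs (bump c p) r" by (rule pairs_bump_cover)
    qed
    moreover have "le_p H0 (pairs (bump c p) r)"
      using bump_bounds c(1) by (simp add: le_p_pairs_iff[OF sc sb])
    ultimately have "pairs (bump c p) r = H0" using H0 by (auto simp: maximals_p_def)
    then have "bump c p p = c p" using pairs_inj[OF sb sc _ p(1)] c(1) by simp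
    then show False using bump_at[of c p] by simp
  qed
qed

lemma common_face_cover:
  assumes S: "S \<subseteq> pairfam (Suc r) 1 n" and T: "T \<subseteq> pairfam (Suc r) 1 n"
    and "prec_fam T S" and "1 \<le> j"
    and H: "H \<in> pairfam r (j + 2) n" "H \<notin> link r n T j" and H': "H' \<in> link r n S (Suc j)"
    and \<tau>: "\<tau> \<subseteq> H" "\<tau> \<subseteq> insert (j + 2) H'"
  shows "\<exists>H0\<in>down_set r (j + 2) n (link r n S (Suc j)) - link r n T j. \<tau> \<subseteq> H0"
proof -
  let ?Z = "{G \<in> down_set r (j + 2) n (link r n S (Suc j)). \<tau> \<subseteq> G}"
  obtain h where h: "H = pairs h r" "pair_seq r (j + 2) n h" using H(1) by (rule pairfamE)
  obtain h' where h': "H' = pairs h' r" "pair_seq r (Suc j + 2) n h'"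
    using H' link_subset_pairfam by (blast elim: pairfamE)
  let ?m = "\<lambda>l. min (h l) (h' l)"
  have sh: "spaced r h" and sh': "spaced r h'" using h(2) h'(2) by (simp_all add: pair_seq_spaced)
  have sm: "spaced r ?m" using spaced_min[OF sh sh'] .
  have "j + 2 \<le> ?m l \<and> ?m l + 1 \<le> n" if "l < r" for l
    using pair_seq_lower[OF h(2) that] pair_seq_upper[OF h(2) that] pair_seq_lower[OF h'(2) that]
    by (simp add: min_def)
  then have "pairs ?m r \<in> pairfam r (j + 2) n"
    using sm by (simp add: pairs_in_pairfam_iff pair_seq_iff_bounds)
  moreover have "le_p (pairs ?m r) H'" using h'(1) by (simp add: le_p_pairs_iff[OF sm sh'])
  moreover have "\<tau> \<subseteq> pairs ?m r"
    using pairs_min_cover[OF sh sh', of "j + 2"] h h' \<tau> by (simp add: pair_seq_def)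
  ultimately have "pairs ?m r \<in> ?Z" using H' by (auto simp: down_set_def)
  moreover have "?Z \<subseteq> pairfam r (j + 2) n" using down_set_subset_pairfam by blast
  then have "finite ?Z" "\<forall>G\<in>?Z. finite G"
    using finite_subset[OF _ finite_pairfam] pairfam_card by blast+
  ultimately obtain H0 where "H0 \<in> maximals_p ?Z" using ex_maximals_p_above by blast
  then have "H0 \<in> ?Z" "H0 \<notin> link r n T j"
    using maximal_cover_notin_link[OF S T assms(3,4) H \<tau>(1)] by (auto simp: maximals_p_def)
  then show ?thesis by blast
qed

lemma Int_Dcx_subset:
  assumes S: "S \<subseteq> pairfam (Suc r) 1 n" and T: "T \<subseteq> pairfam (Suc r) 1 n"
    and "prec_fam T S" and j: "1 \<le> j"
  shows "Dcx (Suc r) n S T j \<inter> Dcx (Suc r) n S T (Suc j)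
    \<subseteq> gen_cx ((\<lambda>H. H \<union> {Suc j}) ` (down_set r (j + 2) n (link r n S (Suc j)) - link r n T j))"
proof
  fix \<sigma> assume "\<sigma> \<in> Dcx (Suc r) n S T j \<inter> Dcx (Suc r) n S T (Suc j)"
  then obtain H H' where H: "H \<in> link r n S j" "H \<notin> link r n T j" "\<sigma> \<subseteq> H \<union> {j..j + 1}"
    and H': "H' \<in> link r n S (Suc j)" "\<sigma> \<subseteq> H' \<union> {Suc j..Suc j + 1}"
    unfolding Dcx_eq_gen_cx[OF S T j] Dcx_eq_gen_cx[OF S T le_SucI[OF j]] by (auto simp: gen_cx_def)
  have "H' \<subseteq> {Suc j + 2..n}" using H'(1) link_subset_pairfam pairfam_subset by blast
  then have "j \<notin> H' \<union> {Suc j..Suc j + 1}" by auto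
  then have "j \<notin> \<sigma>" using H'(2) by blast
  moreover have "{j..j + 1} = {j, Suc j}" "{Suc j..Suc j + 1} = {Suc j, j + 2}" by auto
  ultimately have "\<sigma> - {Suc j} \<subseteq> H" "\<sigma> - {Suc j} \<subseteq> insert (j + 2) H'"
    using H(3) H'(2) by auto
  moreover have "H \<in> pairfam r (j + 2) n" using H(1) link_subset_pairfam by blast
  ultimately obtain H0 where "H0 \<in> down_set r (j + 2) n (link r n S (Suc j)) - link r n T j"
      "\<sigma> - {Suc j} \<subseteq> H0"
    using common_face_cover[OF S T assms(3) j _ H(2) H'(1)] by blast
  then show "\<sigma> \<in> gen_cx ((\<lambda>H. H \<union> {Suc j}) ` (down_set r (j + 2) n (link r n S (Suc j)) - link r n T j))"
    by (auto simp: gen_cx_def)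
qed

lemma subset_Int_Dcx:
  assumes S: "S \<subseteq> pairfam (Suc r) 1 n" and T: "T \<subseteq> pairfam (Suc r) 1 n" and j: "1 \<le> j"
  shows "gen_cx ((\<lambda>H. H \<union> {Suc j}) ` (down_set r (j + 2) n (link r n S (Suc j)) - link r n T j))
    \<subseteq> Dcx (Suc r) n S T j \<inter> Dcx (Suc r) n S T (Suc j)"
proof
  fix \<sigma> assume "\<sigma> \<in> gen_cx ((\<lambda>H. H \<union> {Suc j}) ` (down_set r (j + 2) n (link r n S (Suc j)) - link r n T j))"
  then obtain H where H: "H \<in> down_set r (j + 2) n (link r n S (Suc j))" "H \<notin> link r n T j"
    "\<sigma> \<subseteq> H \<union> {Suc j}" by (auto simp: gen_cx_def)
  have "H \<in> link r n S j" using down_set_link_Suc_subset[OF S j] H(1) by blast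
  moreover have "\<sigma> \<subseteq> H \<union> {j..j + 1}" using H(3) by auto
  ultimately have "\<sigma> \<in> Dcx (Suc r) n S T j"
    using H(2) unfolding Dcx_eq_gen_cx[OF S T j] gen_cx_def by blast
  moreover obtain H' where H': "H' \<in> link r n S (Suc j) - link r n T (Suc j)"
    "H \<union> {j + 1} \<subseteq> H' \<union> {Suc j..Suc j + 1}"
    using down_set_link_Suc_cover[OF S T j H(1,2)] by blast
  have "\<sigma> \<subseteq> H' \<union> {Suc j..Suc j + 1}" using H(3) H'(2) by auto
  then have "\<sigma> \<in> Dcx (Suc r) n S T (Suc j)"
    using H'(1) unfolding Dcx_eq_gen_cx[OF S T le_SucI[OF j]] gen_cx_def by blast
  ultimately show "\<sigma> \<in> Dcx (Suc r) n S T j \<inter> Dcx (Suc r) n S T (Suc j)" by blast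
qed

theorem lemma3p10:
  fixes k n j :: nat and S T :: "nat set set"
  assumes "k \<ge> 1" and "n \<ge> 2 * k"
    and "antichain_in S (pairfam k 1 n)" and "antichain_in T (pairfam k 1 n)"
    and "prec_fam T S" and "j \<ge> 1"
    and "Dcx k n S T (j + 1) \<noteq> {}"
  shows "Dcx k n S T j \<inter> Dcx k n S T (j + 1) =
     cjoin (cdiff (Bcx (k - 1) n (SJ k n S 1 (j + 1)) (j + 2))
                  (Bcx (k - 1) n (SJ k n T 1 j) (j + 2)))
           (simplex {j + 1})"
proof -
  obtain r where k: "k = Suc r" using assms(1) by (cases k) auto
  have S: "S \<subseteq> pairfam (Suc r) 1 n" and T: "T \<subseteq> pairfam (Suc r) 1 n"
    using assms(3,4) k by (simp_all add: antichain_in_def)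
  show ?thesis
    unfolding k diff_Suc_1 Suc_eq_plus1[symmetric] rhs_eq_gen_cx[OF T assms(6)]
    using Int_Dcx_subset[OF S T assms(5,6)] subset_Int_Dcx[OF S T assms(6)]
    by (rule subset_antisym)
qed

end
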